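(* The rewrite system on LJB-contexts consisting of the three cleaning rules $[I,\Gamma]_V \longrightarrow I,[\Gamma]_V$ (if $FV(I)\cap V=\emptyset$), $[\ ]_V \longrightarrow \emptyset$, and $I\,I \longrightarrow I$ (where $I$ is an item and $\Gamma$ an LJB-context, the rules being applicable anywhere inside a context) is terminating: there is no infinite sequence of rewriting steps.
   Context: Formulas of minimal predicate logic are given by terms $t ::= x \mid f(t_1,\dots,t_n)$ and formulas $A ::= P(t_1,\dots,t_n)\mid A\rightarrow A \mid \forall x\,A$. LJB-contexts and items are defined by mutual induction: an LJB-context is a finite multiset $\{I_1,\dots,I_n\}$ of items; an item is either a formula or an expression $[\Gamma]_V$ where $V$ is a finite set of variables and $\Gamma$ an LJB-context (the variables of $V$ are bound by the bracket). Free variables: $FV(\{I_1,\dots,I_n\})=FV(I_1)\cup\dots\cup FV(I_n)$, $FV(A)$ is the usual set of free variables of a formula, $FV([\Gamma]_V)=FV(\Gamma)\setminus V$. Contexts are multisets, so rewriting is modulo associativity and commutativity of context formation; "$[\ ]_V\longrightarrow\emptyset$" means an item $[\Gamma]_V$ with $\Gamma$ empty may be deleted, and "$I\,I\longrightarrow I$" means two identical items in the same context may be replaced by one. *)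

theory Defs
  imports "HOL-Library.Multiset" "HOL-Library.FSet"
begin

datatype ('v, 'f) trm = Var 'v | Fn 'f "('v, 'f) trm list"

datatype ('v, 'f, 'p) form =
    Pred 'p "('v, 'f) trm list"
  | Imp "('v, 'f, 'p) form" "('v, 'f, 'p) form"
  | All 'v "('v, 'f, 'p) form"

text \<open>Items: a formula, or a bracket [Gamma]_V with Gamma an LJB-context
 (finite multiset of items) and V a finite set of variables.\<close>

datatype ('v, 'f, 'p) item =
    Fm "('v, 'f, 'p) form"
  | Br "('v, 'f, 'p) item multiset" "'v fset"

type_synonym ('v, 'f, 'p) ctx = "('v, 'f, 'p) item multiset"

primrec fv_trm :: "('v, 'f) trm \<Rightarrow> 'v set" where
  "fv_trm (Var x) = {x}"
| "fv_trm (Fn f ts) = \<Union> (set (map fv_trm ts))"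

primrec fv_form :: "('v, 'f, 'p) form \<Rightarrow> 'v set" where
  "fv_form (Pred P ts) = \<Union> (set (map fv_trm ts))"
| "fv_form (Imp A B) = fv_form A \<union> fv_form B"
| "fv_form (All x A) = fv_form A - {x}"

primrec fv_item :: "('v, 'f, 'p) item \<Rightarrow> 'v set" where
  "fv_item (Fm A) = fv_form A"
| "fv_item (Br G V) = \<Union> (set_mset (image_mset fv_item G)) - fset V"

definition fv_ctx :: "('v, 'f, 'p) ctx \<Rightarrow> 'v set" where
  "fv_ctx G = \<Union> (fv_item ` set_mset G)"

text \<open>One cleaning step on LJB-contexts, modulo AC of context formation
 (contexts are multisets), applicable anywhere (also inside brackets).\<close>

inductive clean_step :: "('v, 'f, 'p) ctx \<Rightarrow> ('v, 'f, 'p) ctx \<Rightarrow> bool" where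
  extrude: "fv_item I \<inter> fset V = {} \<Longrightarrow>
     clean_step (add_mset (Br (add_mset I G) V) D) (add_mset I (add_mset (Br G V) D))"
| empty_br: "clean_step (add_mset (Br {#} V) D) D"
| contract: "clean_step (add_mset I (add_mset I D)) (add_mset I D)"
| inside: "clean_step G G' \<Longrightarrow> clean_step (add_mset (Br G V) D) (add_mset (Br G' V) D)"

end

theory Submission
  imports Defs
begin

text \<open>Weigh a formula by 1 and a bracket [\<Gamma>]_V by 3 to the power of the weight of \<Gamma>.
  Every cleaning step then lowers the total weight of a context: deleting an empty bracket
  or one copy of a duplicated item removes a positive summand, and extruding I from
  [I, \<Gamma>]_V replaces 3^(w(I) + w(\<Gamma>)) by the smaller w(I) + 3^w(\<Gamma>). Since the weight
  of a bracket is monotone in the weight of its contents, the decrease also propagates out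
  of nested brackets.\<close>

primrec item_weight :: "('v, 'f, 'p) item \<Rightarrow> nat" where
  "item_weight (Fm A) = 1"
| "item_weight (Br G V) = 3 ^ (\<Sum>I\<in>#G. item_weight I)"

definition ctx_weight :: "('v, 'f, 'p) ctx \<Rightarrow> nat" where
  "ctx_weight G = (\<Sum>I\<in>#G. item_weight I)"

lemma item_weight_pos: "0 < item_weight I"
  by (cases I) auto

lemma add_power3_less_power3_add:
  fixes a b :: nat
  assumes "0 < a"
  shows "a + 3 ^ b < 3 ^ (a + b)"
proof -
  have "2 * a + 1 \<le> (3::nat) ^ a"
    by (induction a) auto
  then have "a + 2 \<le> (3::nat) ^ a"
    using assms by linarith
  then have "(a + 2) * 3 ^ b \<le> (3::nat) ^ a * 3 ^ b"
    by (rule mult_right_mono) simp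
  moreover have "a + 3 ^ b < (a + 2) * 3 ^ b"
  proof -
    have "a \<le> a * 3 ^ b" and "0 < (3::nat) ^ b"
      by simp_all
    then show ?thesis
      unfolding distrib_right by linarith
  qed
  ultimately show ?thesis
    by (simp add: power_add)
qed

lemma clean_step_ctx_weight_less:
  "clean_step G G' \<Longrightarrow> ctx_weight G' < ctx_weight G"
proof (induction rule: clean_step.induct)
  case (extrude I V G D)
  then show ?case
    using add_power3_less_power3_add[OF item_weight_pos] by (simp add: ctx_weight_def)
next
  case (contract I D)
  then show ?case
    using item_weight_pos[of I] by (simp add: ctx_weight_def)
qed (simp_all add: ctx_weight_def)

lemma wfp_converse_clean_step: "wfp (\<lambda>G' G. clean_step G G')"
  by (rule wfp_if_convertible_to_nat[of _ ctx_weight]) (rule clean_step_ctx_weight_less)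

theorem proposition2:
  shows "\<not> (\<exists>f :: nat \<Rightarrow> ('v, 'f, 'p) ctx. \<forall>i. clean_step (f i) (f (Suc i)))"
  using wfp_converse_clean_step
    wf_iff_no_infinite_down_chain[to_pred, of "\<lambda>G' G. clean_step G G'"]
  by blast

end
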